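(* Let $H$ and $X$ be Hilbert spaces with inner products $(\cdot,\cdot)$, let $X^*$ be the dual space of $X$, and let $\langle\cdot,\cdot\rangle$ denote the sesquilinear duality pairing of $X^*$ and $X$. Assume $F:H\to H$ is a linear compact normal operator satisfying $F=GM^*G^*$, where $G:X\to H$ and $M:X^*\to X$ are bounded linear operators and $G^*:H\to X^*$ is defined by $\langle G^*g,\varphi\rangle=(g,G\varphi)$ for all $\varphi\in X$, $g\in H$. Assume further that $G^*$ has a finite dimensional null space and that $M=M_0+C$ for some compact operator $C$ and some self-adjoint operator $M_0$ which is coercive on $G^*(H)$, i.e. there exists $c_0>0$ with $\langle\phi,M_0\phi\rangle\ge c_0\|\phi\|^2$ for all $\phi\in G^*(H)$. Then $F$ has at most a finite number of eigenvalues whose real parts are negative. *)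

theory Defs
  imports "HOL-Analysis.Analysis"
begin

text \<open>The library only provides real inner product spaces, so complex vector spaces,
complex inner product spaces and complex Hilbert spaces are introduced here as type classes.\<close>

class complex_vector = real_vector +
  fixes scaleC :: "complex \<Rightarrow> 'a \<Rightarrow> 'a"
  assumes scaleC_add_right: "scaleC a (x + y) = scaleC a x + scaleC a y"
    and scaleC_add_left: "scaleC (a + b) x = scaleC a x + scaleC b x"
    and scaleC_scaleC: "scaleC a (scaleC b x) = scaleC (a * b) x"
    and scaleC_one: "scaleC 1 x = x"
    and scaleR_scaleC: "scaleR r x = scaleC (complex_of_real r) x"

class complex_inner = complex_vector + real_normed_vector +
  fixes cinner :: "'a \<Rightarrow> 'a \<Rightarrow> complex"
  assumes cinner_commute: "cinner x y = cnj (cinner y x)"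
    and cinner_add_left: "cinner (x + y) z = cinner x z + cinner y z"
    and cinner_scaleC_left: "cinner (scaleC r x) y = r * cinner x y"
    and cinner_ge_zero: "0 \<le> Re (cinner x x)"
    and cinner_eq_zero_iff: "cinner x x = 0 \<longleftrightarrow> x = 0"
    and norm_eq_sqrt_cinner: "norm x = sqrt (Re (cinner x x))"

class chilbert_space = complex_inner + complete_space

definition clinear :: "('a::complex_vector \<Rightarrow> 'b::complex_vector) \<Rightarrow> bool" where
  "clinear f \<longleftrightarrow> (\<forall>x y. f (x + y) = f x + f y) \<and> (\<forall>c x. f (scaleC c x) = scaleC c (f x))"

definition bounded_clinear :: "('a::complex_inner \<Rightarrow> 'b::complex_inner) \<Rightarrow> bool" where
  "bounded_clinear f \<longleftrightarrow> clinear f \<and> (\<exists>K. \<forall>x. norm (f x) \<le> K * norm x)"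

definition compact_op :: "('a::complex_inner \<Rightarrow> 'b::complex_inner) \<Rightarrow> bool" where
  "compact_op f \<longleftrightarrow> clinear f \<and> (\<forall>S. bounded S \<longrightarrow> compact (closure (f ` S)))"

definition normal_op :: "('a::complex_inner \<Rightarrow> 'a) \<Rightarrow> bool" where
  "normal_op F \<longleftrightarrow> (\<exists>Fa. (\<forall>x y. cinner (F x) y = cinner x (Fa y)) \<and> F \<circ> Fa = Fa \<circ> F)"

definition eigenvalue :: "('a::complex_vector \<Rightarrow> 'a) \<Rightarrow> complex \<Rightarrow> bool" where
  "eigenvalue F l \<longleftrightarrow> (\<exists>x. x \<noteq> 0 \<and> F x = scaleC l x)"

definition cspan :: "'a::complex_vector set \<Rightarrow> 'a set" where
  "cspan B = {\<Sum>b\<in>T. scaleC (c b) b | T c. finite T \<and> T \<subseteq> B}"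

definition finite_dim_subspace :: "'a::complex_vector set \<Rightarrow> bool" where
  "finite_dim_subspace N \<longleftrightarrow> (\<exists>B. finite B \<and> N \<subseteq> cspan B)"

text \<open>X* is the space of bounded antilinear functionals on X; the pairing is
  \<open>\<langle>f, \<phi>\<rangle> = f \<phi>\<close>, linear in f and antilinear in \<phi>.\<close>

definition dual_space :: "('x::complex_inner \<Rightarrow> complex) set" where
  "dual_space = {f. (\<forall>x y. f (x + y) = f x + f y) \<and> (\<forall>c x. f (scaleC c x) = cnj c * f x)
                    \<and> (\<exists>K. \<forall>x. cmod (f x) \<le> K * norm x)}"

definition dual_norm :: "('x::complex_inner \<Rightarrow> complex) \<Rightarrow> real" where
  "dual_norm f = Sup {cmod (f x) | x. norm x \<le> 1}"

definition clinear_on_dual :: "(('x::complex_inner \<Rightarrow> complex) \<Rightarrow> 'y::complex_vector) \<Rightarrow> bool" where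
  "clinear_on_dual M \<longleftrightarrow>
     (\<forall>f\<in>dual_space. \<forall>g\<in>dual_space. M (\<lambda>x. f x + g x) = M f + M g) \<and>
     (\<forall>f\<in>dual_space. \<forall>c. M (\<lambda>x. c * f x) = scaleC c (M f))"

definition bounded_on_dual :: "(('x::complex_inner \<Rightarrow> complex) \<Rightarrow> 'y::complex_inner) \<Rightarrow> bool" where
  "bounded_on_dual M \<longleftrightarrow> (\<exists>K. \<forall>f\<in>dual_space. norm (M f) \<le> K * dual_norm f)"

definition compact_on_dual :: "(('x::complex_inner \<Rightarrow> complex) \<Rightarrow> 'y::complex_inner) \<Rightarrow> bool" where
  "compact_on_dual C \<longleftrightarrow> clinear_on_dual C \<and>
     (\<forall>S\<subseteq>dual_space. (\<exists>B. \<forall>f\<in>S. dual_norm f \<le> B) \<longrightarrow> compact (closure (C ` S)))"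

text \<open>Adjoint of M : X* \<rightarrow> X is the operator M* : X* \<rightarrow> X (using X** = X) with
  \<open>\<langle>\<phi>, M* \<psi>\<rangle> = conj \<langle>\<psi>, M \<phi>\<rangle>\<close>.\<close>
definition is_dual_adjoint :: "(('x::complex_inner \<Rightarrow> complex) \<Rightarrow> 'x) \<Rightarrow> (('x \<Rightarrow> complex) \<Rightarrow> 'x) \<Rightarrow> bool" where
  "is_dual_adjoint Ms M \<longleftrightarrow> (\<forall>\<phi>\<in>dual_space. \<forall>\<psi>\<in>dual_space. \<phi> (Ms \<psi>) = cnj (\<psi> (M \<phi>)))"

definition selfadjoint_on_dual :: "(('x::complex_inner \<Rightarrow> complex) \<Rightarrow> 'x) \<Rightarrow> bool" where
  "selfadjoint_on_dual M \<longleftrightarrow> is_dual_adjoint M M"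

definition dual_adj :: "('x::complex_inner \<Rightarrow> 'h::complex_inner) \<Rightarrow> 'h \<Rightarrow> ('x \<Rightarrow> complex)" where
  "dual_adj G g = (\<lambda>\<phi>. cinner g (G \<phi>))"

end

theory Submission
  imports Defs
begin

text \<open>Compactness of \<open>C\<close> gives finitely many vectors \<open>y\<^sub>1, \<dots>, y\<^sub>n\<close> such that
  \<open>\<parallel>C \<psi>\<parallel> \<le> c\<^sub>0 \<parallel>\<psi>\<parallel>\<close> whenever \<open>C \<psi>\<close> is orthogonal to all of them. On the subspace of those
  \<open>g \<in> H\<close> with \<open>C (G* g) \<perp> y\<^sub>1, \<dots>, y\<^sub>n\<close>, which has codimension at most \<open>n\<close>, coercivity of
  \<open>M\<^sub>0\<close> then yields \<open>Re (F g, g) = Re \<langle>G* g, M G* g\<rangle> \<ge> 0\<close>. Eigenvectors of the normal operator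
  \<open>F\<close> for distinct eigenvalues are orthogonal, so \<open>n + 1\<close> eigenvalues with negative real part
  would span a subspace meeting that one in some \<open>g \<noteq> 0\<close> with \<open>Re (F g, g) < 0\<close>.\<close>

lemma scaleC_of_real: "scaleC (complex_of_real r) (x::'a::complex_vector) = scaleR r x"
  by (simp add: scaleR_scaleC)

lemma scaleC_zero_left [simp]: "scaleC 0 (x::'a::complex_vector) = 0"
  using scaleC_of_real[of 0 x] by simp

lemma cinner_zero_left [simp]: "cinner 0 (x::'a::complex_inner) = 0"
  using cinner_add_left[of 0 0 x] by simp

lemma cinner_zero_right [simp]: "cinner (x::'a::complex_inner) 0 = 0"
  by (metis cinner_commute cinner_zero_left complex_cnj_zero)

lemma cinner_add_right: "cinner (x::'a::complex_inner) (y + z) = cinner x y + cinner x z"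
  by (metis cinner_add_left cinner_commute complex_cnj_add)

lemma cinner_scaleC_right: "cinner (x::'a::complex_inner) (scaleC c y) = cnj c * cinner x y"
  by (metis cinner_commute cinner_scaleC_left complex_cnj_cnj complex_cnj_mult)

lemma cinner_diff_left: "cinner ((x::'a::complex_inner) - y) z = cinner x z - cinner y z"
  using cinner_add_left[of "x - y" y z] by (simp add: eq_diff_eq)

lemma cinner_diff_right: "cinner (x::'a::complex_inner) (y - z) = cinner x y - cinner x z"
  using cinner_add_right[of x "y - z" z] by (simp add: eq_diff_eq)

lemma cinner_sum_left: "cinner (\<Sum>i\<in>A. f i) (z::'a::complex_inner) = (\<Sum>i\<in>A. cinner (f i) z)"
  by (induction A rule: infinite_finite_induct) (simp_all add: cinner_add_left)

lemma cinner_sum_right: "cinner (z::'a::complex_inner) (\<Sum>i\<in>A. f i) = (\<Sum>i\<in>A. cinner z (f i))"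
  by (induction A rule: infinite_finite_induct) (simp_all add: cinner_add_right)

lemma cinner_self: "cinner (x::'a::complex_inner) x = complex_of_real ((norm x)\<^sup>2)"
proof -
  have "Im (cinner x x) = 0"
    using arg_cong[OF cinner_commute[of x x], of Im] by simp
  moreover have "Re (cinner x x) = (norm x)\<^sup>2"
    using norm_eq_sqrt_cinner[of x] cinner_ge_zero[of x] by simp
  ultimately show ?thesis by (simp add: complex_eq_iff)
qed

lemma norm_add_square_orthogonal:
  assumes "cinner (x::'a::complex_inner) y = 0"
  shows "(norm (x + y))\<^sup>2 = (norm x)\<^sup>2 + (norm y)\<^sup>2"
proof -
  have "cinner y x = 0" using assms by (metis cinner_commute complex_cnj_zero)
  then have "cinner (x + y) (x + y) = cinner x x + cinner y y"
    using assms by (simp add: cinner_add_left cinner_add_right)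
  then have "complex_of_real ((norm (x + y))\<^sup>2) = complex_of_real ((norm x)\<^sup>2 + (norm y)\<^sup>2)"
    by (simp only: cinner_self of_real_add)
  then show ?thesis by (simp only: of_real_eq_iff)
qed

lemma norm_scaleC: "norm (scaleC c (x::'a::complex_inner)) = cmod c * norm x"
proof -
  have "cinner (scaleC c x) (scaleC c x) = (c * cnj c) * cinner x x"
    by (simp add: cinner_scaleC_left cinner_scaleC_right)
  then have "complex_of_real ((norm (scaleC c x))\<^sup>2) = complex_of_real ((cmod c * norm x)\<^sup>2)"
    by (simp only: cinner_self complex_norm_square of_real_mult power_mult_distrib
        flip: of_real_power)
  then have "(norm (scaleC c x))\<^sup>2 = (cmod c * norm x)\<^sup>2" by (simp only: of_real_eq_iff)
  then show ?thesis by (simp add: power2_eq_iff_nonneg)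
qed

lemma norm_cinner_le: "cmod (cinner (x::'a::complex_inner) y) \<le> norm x * norm y"
proof (cases "y = 0")
  case True
  then show ?thesis by simp
next
  case False
  have yy: "cinner y y = complex_of_real ((norm y)\<^sup>2)" by (rule cinner_self)
  have yy0: "cinner y y \<noteq> 0" using False cinner_eq_zero_iff by blast
  define t where "t = cinner x y / cinner y y"
  define w where "w = x - scaleC t y"
  have "cinner w (scaleC t y) = 0"
    unfolding w_def t_def using yy0
    by (simp add: cinner_diff_left cinner_scaleC_left cinner_scaleC_right)
  then have "(norm x)\<^sup>2 = (norm w)\<^sup>2 + (norm (scaleC t y))\<^sup>2"
    using norm_add_square_orthogonal[of w "scaleC t y"] by (simp add: w_def)
  then have "(cmod t * norm y)\<^sup>2 \<le> (norm x)\<^sup>2" by (simp add: norm_scaleC)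
  then have "cmod t * norm y \<le> norm x" by (rule power2_le_imp_le) simp
  moreover have "cmod t = cmod (cinner x y) / (norm y)\<^sup>2"
    unfolding t_def yy by (simp add: norm_divide norm_power)
  ultimately show ?thesis using False by (simp add: field_simps power2_eq_square)
qed

lemma cinner_eqI: "(\<And>z. cinner z a = cinner z b) \<Longrightarrow> a = (b::'a::complex_inner)"
  by (metis cinner_diff_right cinner_eq_zero_iff eq_iff_diff_eq_0)

definition clinear_functional :: "('a::complex_vector \<Rightarrow> complex) \<Rightarrow> bool" where
  "clinear_functional f \<longleftrightarrow> (\<forall>x y. f (x + y) = f x + f y) \<and> (\<forall>c x. f (scaleC c x) = c * f x)"

lemma clinearD:
  assumes "clinear f"
  shows "f (x + y) = f x + f y" "f (scaleC c x) = scaleC c (f x)"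
  using assms unfolding clinear_def by blast+

lemma clinear_sum:
  assumes "clinear f"
  shows "f (\<Sum>i\<in>A. scaleC (a i) (v i)) = (\<Sum>i\<in>A. scaleC (a i) (f (v i)))"
proof -
  have "f 0 = 0" using clinearD(2)[OF assms, of 0 0] by simp
  then show ?thesis
    by (induction A rule: infinite_finite_induct) (simp_all add: clinearD[OF assms])
qed

lemma clinear_functional_sum:
  assumes "clinear_functional f"
  shows "f (\<Sum>i\<in>A. scaleC (a i) (v i)) = (\<Sum>i\<in>A. a i * f (v i))"
proof -
  have lin: "f (x + y) = f x + f y" "f (scaleC c x) = c * f x" for x y c
    using assms unfolding clinear_functional_def by blast+
  have "f 0 = 0" using lin(2)[of 0 0] by simp
  then show ?thesis
    by (induction A rule: infinite_finite_induct) (simp_all add: lin)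
qed

lemma exists_nonzero_solution_homogeneous_system:
  fixes E :: "('i \<Rightarrow> 'a::field) set"
  assumes "finite I" "finite E" "card E < card I"
  shows "\<exists>a. (\<exists>i\<in>I. a i \<noteq> 0) \<and> (\<forall>e\<in>E. (\<Sum>j\<in>I. e j * a j) = 0)"
  using assms
proof (induction I arbitrary: E rule: finite_induct)
  case empty
  then show ?case by simp
next
  case (insert i I)
  show ?case
  proof (cases "\<exists>e0\<in>E. e0 i \<noteq> 0")
    case False
    define a :: "'i \<Rightarrow> 'a" where "a j = (if j = i then 1 else 0)" for j
    have "(\<Sum>j\<in>I. e j * a j) = 0" for e
      using insert.hyps(2) by (intro sum.neutral) (auto simp: a_def)
    then have "\<forall>e\<in>E. (\<Sum>j\<in>insert i I. e j * a j) = 0"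
      using False insert.hyps by (simp add: a_def)
    moreover have "a i \<noteq> 0" by (simp add: a_def)
    ultimately show ?thesis by blast
  next
    case True
    then obtain e0 where e0: "e0 \<in> E" "e0 i \<noteq> 0" by blast
    \<comment> \<open>Gaussian elimination of the unknown \<open>a i\<close> using the equation \<open>e0\<close>.\<close>
    define E' where "E' = (\<lambda>e j. e j - (e i / e0 i) * e0 j) ` (E - {e0})"
    have "card E' \<le> card E - 1"
      unfolding E'_def using card_image_le[of "E - {e0}"] e0 insert.prems by simp
    moreover have "card E > 0" using e0(1) insert.prems(1) card_gt_0_iff by blast
    ultimately have "card E' < card I" using insert.prems(2) insert.hyps by simp
    then obtain a' where a': "\<exists>j\<in>I. a' j \<noteq> 0" "\<forall>e\<in>E'. (\<Sum>j\<in>I. e j * a' j) = 0"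
      using insert.IH[of E'] insert.prems unfolding E'_def by auto
    define S0 where "S0 = (\<Sum>j\<in>I. e0 j * a' j)"
    define a where "a = a'(i := - S0 / e0 i)"
    have sum_a: "(\<Sum>j\<in>insert i I. e j * a j) = e i * (- S0 / e0 i) + (\<Sum>j\<in>I. e j * a' j)" for e
      using insert.hyps by (auto simp: a_def intro!: sum.cong)
    have "(\<Sum>j\<in>insert i I. e j * a j) = 0" if e: "e \<in> E" for e
    proof (cases "e = e0")
      case True
      then show ?thesis using e0(2) unfolding sum_a S0_def by simp
    next
      case False
      then have "(\<lambda>j. e j - (e i / e0 i) * e0 j) \<in> E'" unfolding E'_def using e by blast
      from bspec[OF a'(2) this] have "(\<Sum>j\<in>I. (e j - (e i / e0 i) * e0 j) * a' j) = 0" by simp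
      then have "(\<Sum>j\<in>I. e j * a' j) = (e i / e0 i) * S0"
        unfolding S0_def by (simp add: algebra_simps sum_subtractf sum_distrib_left)
      then show ?thesis unfolding sum_a by simp
    qed
    moreover have "\<exists>j\<in>insert i I. a j \<noteq> 0"
      using a'(1) insert.hyps by (auto simp: a_def)
    ultimately show ?thesis by blast
  qed
qed

lemma exists_nonzero_combination_in_kernels:
  assumes "finite I" "finite \<Phi>" "\<forall>\<phi>\<in>\<Phi>. clinear_functional \<phi>" "card \<Phi> < card I"
  obtains a where "\<exists>i\<in>I. a i \<noteq> 0" "\<forall>\<phi>\<in>\<Phi>. \<phi> (\<Sum>i\<in>I. scaleC (a i) (v i)) = 0"
proof -
  define E where "E = (\<lambda>\<phi> i. \<phi> (v i)) ` \<Phi>"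
  have "card E < card I"
    unfolding E_def using card_image_le[OF assms(2), of "\<lambda>\<phi> i. \<phi> (v i)"] assms(4) by linarith
  then obtain a where "\<exists>i\<in>I. a i \<noteq> 0" "\<forall>e\<in>E. (\<Sum>i\<in>I. e i * a i) = 0"
    using exists_nonzero_solution_homogeneous_system[OF assms(1)] assms(2) E_def by blast
  moreover have "\<phi> (\<Sum>i\<in>I. scaleC (a i) (v i)) = (\<Sum>i\<in>I. \<phi> (v i) * a i)" if "\<phi> \<in> \<Phi>" for \<phi>
    using clinear_functional_sum[of \<phi> a v I] assms(3) that by (simp add: mult.commute)
  ultimately show ?thesis using that unfolding E_def by auto
qed

section \<open>Eigenvectors of normal operators\<close>

lemma adjoint_scaleC:
  assumes adj: "\<forall>x y. cinner (F x) y = cinner x (Fa y)"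
  shows "Fa (scaleC c x) = scaleC c (Fa (x::'a::complex_inner))"
  by (rule cinner_eqI) (metis adj cinner_scaleC_right)

lemma normal_eigenvector_adjoint:
  assumes adj: "\<forall>x y. cinner (F x) y = cinner x (Fa y)" and comm: "F \<circ> Fa = Fa \<circ> F"
    and Fv: "F v = scaleC l (v::'a::complex_inner)"
  shows "Fa v = scaleC (cnj l) v"
proof -
  define w where "w = Fa v - scaleC (cnj l) v"
  have "cinner v (Fa v) = l * cinner v v"
    using adj Fv by (metis cinner_scaleC_left)
  then have vw: "cinner v w = 0" unfolding w_def by (simp add: cinner_diff_right cinner_scaleC_right)
  have "F (Fa v) = Fa (F v)" using comm by (metis comp_apply)
  then have "F (Fa v) = scaleC l (Fa v)" using Fv adjoint_scaleC[OF adj] by simp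
  then have "cinner (Fa v) (Fa v) = l * cinner (Fa v) v" by (metis adj cinner_scaleC_left)
  then have "cinner (Fa v) w = 0" unfolding w_def by (simp add: cinner_diff_right cinner_scaleC_right)
  with vw have "cinner w w = 0"
    unfolding w_def by (simp add: cinner_diff_left cinner_scaleC_left)
  then show ?thesis using cinner_eq_zero_iff[of w] unfolding w_def by simp
qed

lemma normal_eigenvectors_orthogonal:
  assumes "normal_op F"
    and Fv: "F v = scaleC l (v::'a::complex_inner)" and Fw: "F w = scaleC m w" and "l \<noteq> m"
  shows "cinner v w = 0"
proof -
  obtain Fa where adj: "\<forall>x y. cinner (F x) y = cinner x (Fa y)" and comm: "F \<circ> Fa = Fa \<circ> F"
    using assms(1) unfolding normal_op_def by blast
  have "l * cinner v w = cinner (F v) w" using Fv by (simp add: cinner_scaleC_left)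
  also have "\<dots> = cinner v (Fa w)" using adj by simp
  also have "\<dots> = m * cinner v w"
    using normal_eigenvector_adjoint[OF adj comm Fw] by (simp add: cinner_scaleC_right)
  finally have "(l - m) * cinner v w = 0" by (simp add: algebra_simps)
  then show ?thesis using \<open>l \<noteq> m\<close> by simp
qed

lemma cinner_sum_orthogonal:
  assumes "finite A" and orth: "\<forall>i\<in>A. \<forall>j\<in>A. i \<noteq> j \<longrightarrow> cinner (v i) (v j) = 0"
  shows "cinner (\<Sum>i\<in>A. scaleC (b i) (v i)) (\<Sum>j\<in>A. scaleC (a j) ((v j)::'a::complex_inner))
       = (\<Sum>i\<in>A. b i * cnj (a i) * cinner (v i) (v i))"
proof -
  have diagonal: "(\<Sum>j\<in>A. cnj (a j) * cinner (v i) (v j)) = cnj (a i) * cinner (v i) (v i)"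
    if "i \<in> A" for i
  proof -
    have "(\<Sum>j\<in>A. cnj (a j) * cinner (v i) (v j))
        = (\<Sum>j\<in>A. if j = i then cnj (a i) * cinner (v i) (v i) else 0)"
      using orth that by (intro sum.cong) auto
    then show ?thesis using assms(1) that by simp
  qed
  have "cinner (\<Sum>i\<in>A. scaleC (b i) (v i)) (\<Sum>j\<in>A. scaleC (a j) (v j))
      = (\<Sum>i\<in>A. b i * (\<Sum>j\<in>A. cnj (a j) * cinner (v i) (v j)))"
    unfolding cinner_sum_left
    by (intro sum.cong refl)
      (simp add: cinner_sum_right cinner_scaleC_left cinner_scaleC_right sum_distrib_left
        mult.left_commute)
  also have "\<dots> = (\<Sum>i\<in>A. b i * cnj (a i) * cinner (v i) (v i))"
    by (intro sum.cong refl) (simp add: diagonal)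
  finally show ?thesis .
qed

lemma Re_cinner_eigenvector_combination:
  fixes v :: "'i \<Rightarrow> 'a::complex_inner" and a :: "'i \<Rightarrow> complex"
  assumes "clinear F" "finite I"
    and orth: "\<forall>i\<in>I. \<forall>j\<in>I. i \<noteq> j \<longrightarrow> cinner (v i) (v j) = 0"
    and eigen: "\<forall>i\<in>I. F (v i) = scaleC (l i) (v i)"
  defines "g \<equiv> \<Sum>i\<in>I. scaleC (a i) (v i)"
  shows "Re (cinner (F g) g) = (\<Sum>i\<in>I. Re (l i) * ((cmod (a i))\<^sup>2 * (norm (v i))\<^sup>2))"
proof -
  have "F g = (\<Sum>i\<in>I. scaleC (a i * l i) (v i))"
    unfolding g_def clinear_sum[OF assms(1)] using eigen by (simp add: scaleC_scaleC)
  then have "cinner (F g) g = (\<Sum>i\<in>I. (a i * l i) * cnj (a i) * cinner (v i) (v i))"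
    unfolding g_def by (simp add: cinner_sum_orthogonal[OF assms(2) orth])
  also have "\<dots> = (\<Sum>i\<in>I. l i * complex_of_real ((cmod (a i))\<^sup>2 * (norm (v i))\<^sup>2))"
    by (intro sum.cong refl)
      (simp add: cinner_self mult_ac flip: complex_norm_square)
  finally show ?thesis by (simp add: Re_sum)
qed

lemma card_negative_eigenvalues_le:
  fixes F :: "'a::complex_inner \<Rightarrow> 'a"
  assumes "clinear F" "normal_op F" "finite \<Phi>" "\<forall>\<phi>\<in>\<Phi>. clinear_functional \<phi>"
    and nonneg: "\<And>g. \<forall>\<phi>\<in>\<Phi>. \<phi> g = 0 \<Longrightarrow> 0 \<le> Re (cinner (F g) g)"
    and L: "finite L" "L \<subseteq> {l. eigenvalue F l \<and> Re l < 0}"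
  shows "card L \<le> card \<Phi>"
proof (rule ccontr)
  assume "\<not> card L \<le> card \<Phi>"
  define v where "v l = (SOME v. v \<noteq> 0 \<and> F v = scaleC l v)" for l
  have v: "v l \<noteq> 0 \<and> F (v l) = scaleC l (v l)" if "l \<in> L" for l
  proof -
    have "\<exists>v. v \<noteq> 0 \<and> F v = scaleC l v" using L(2) that unfolding eigenvalue_def by blast
    then show ?thesis unfolding v_def by (rule someI_ex)
  qed
  have orth: "\<forall>l\<in>L. \<forall>m\<in>L. l \<noteq> m \<longrightarrow> cinner (v l) (v m) = 0"
    using normal_eigenvectors_orthogonal[OF assms(2)] v by blast
  obtain a where a: "\<exists>l\<in>L. a l \<noteq> 0" "\<forall>\<phi>\<in>\<Phi>. \<phi> (\<Sum>l\<in>L. scaleC (a l) (v l)) = 0"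
    using exists_nonzero_combination_in_kernels[OF L(1) assms(3,4)] \<open>\<not> card L \<le> card \<Phi>\<close>
    by (metis not_le)
  define g where "g = (\<Sum>l\<in>L. scaleC (a l) (v l))"
  define t where "t l = Re l * ((cmod (a l))\<^sup>2 * (norm (v l))\<^sup>2)" for l
  have "Re (cinner (F g) g) = (\<Sum>l\<in>L. t l)"
    unfolding g_def t_def using v
    by (intro Re_cinner_eigenvector_combination[OF assms(1) L(1) orth, where l = "\<lambda>l. l"]) blast
  moreover have "0 < (\<Sum>l\<in>L. - t l)"
  proof -
    obtain l0 where "l0 \<in> L" "a l0 \<noteq> 0" using a(1) by blast
    moreover have "Re l < 0" "v l \<noteq> 0" if "l \<in> L" for l
      using L(2) v that by auto
    ultimately show ?thesis
      unfolding t_def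
      by (intro sum_pos2[OF L(1), of l0]) (auto simp: mult_neg_pos mult_nonpos_nonneg less_imp_le)
  qed
  moreover have "0 \<le> Re (cinner (F g) g)" using nonneg a(2) unfolding g_def by blast
  ultimately show False by (simp add: sum_negf)
qed

lemma finite_negative_eigenvalues:
  fixes F :: "'a::complex_inner \<Rightarrow> 'a"
  assumes "clinear F" "normal_op F" "finite \<Phi>" "\<forall>\<phi>\<in>\<Phi>. clinear_functional \<phi>"
    and "\<And>g. \<forall>\<phi>\<in>\<Phi>. \<phi> g = 0 \<Longrightarrow> 0 \<le> Re (cinner (F g) g)"
  shows "finite {l. eigenvalue F l \<and> Re l < 0}"
proof (rule ccontr)
  assume "infinite {l. eigenvalue F l \<and> Re l < 0}"
  then obtain L where "finite L" "card L = Suc (card \<Phi>)" "L \<subseteq> {l. eigenvalue F l \<and> Re l < 0}"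
    using infinite_arbitrarily_large by blast
  then show False using card_negative_eigenvalues_le[OF assms] by fastforce
qed

lemma dual_space_zero:
  assumes "f \<in> dual_space"
  shows "f 0 = 0"
proof -
  have "f (0 + 0) = f 0 + f 0" using assms unfolding dual_space_def by blast
  then show ?thesis by simp
qed

lemma bdd_above_dual_norm_set:
  assumes "(f::'x::complex_inner \<Rightarrow> complex) \<in> dual_space"
  shows "bdd_above {cmod (f x) | x. norm x \<le> 1}"
proof -
  obtain K where K: "\<forall>x. cmod (f x) \<le> K * norm x" using assms unfolding dual_space_def by blast
  have "cmod (f x) \<le> max K 0" if "norm x \<le> 1" for x
  proof -
    have "cmod (f x) \<le> K * norm x" using K by blast
    also have "\<dots> \<le> max K 0 * norm x" by (simp add: mult_right_mono)
    also have "\<dots> \<le> max K 0" using that by (simp add: mult_left_le)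
    finally show ?thesis .
  qed
  then show ?thesis unfolding bdd_above_def by blast
qed

lemma dual_norm_le:
  assumes "(f::'x::complex_inner \<Rightarrow> complex) \<in> dual_space"
    and "\<And>x. norm x \<le> 1 \<Longrightarrow> cmod (f x) \<le> B"
  shows "dual_norm f \<le> B"
  unfolding dual_norm_def
proof (rule cSup_least)
  show "{cmod (f x) |x. norm x \<le> 1} \<noteq> {}" by (auto intro!: exI[of _ 0])
qed (use assms(2) in blast)

lemma dual_norm_nonneg:
  assumes "(f::'x::complex_inner \<Rightarrow> complex) \<in> dual_space"
  shows "0 \<le> dual_norm f"
proof -
  have "cmod (f 0) \<le> dual_norm f"
    unfolding dual_norm_def using bdd_above_dual_norm_set[OF assms] by (intro cSup_upper) auto
  then show ?thesis by (simp add: dual_space_zero[OF assms])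
qed

lemma norm_dual_le:
  assumes "(f::'x::complex_inner \<Rightarrow> complex) \<in> dual_space"
  shows "cmod (f x) \<le> dual_norm f * norm x"
proof (cases "x = 0")
  case True
  then show ?thesis by (simp add: dual_space_zero[OF assms])
next
  case False
  define u where "u = scaleR (1 / norm x) x"
  have "norm u = 1" using False by (simp add: u_def)
  then have "cmod (f u) \<le> dual_norm f"
    unfolding dual_norm_def using bdd_above_dual_norm_set[OF assms] by (intro cSup_upper) auto
  moreover have "f u = cnj (complex_of_real (1 / norm x)) * f x"
    using assms unfolding dual_space_def u_def scaleR_scaleC by blast
  then have "cmod (f u) = cmod (f x) / norm x" by (simp add: norm_divide)
  ultimately show ?thesis using False by (simp add: field_simps)
qed

lemma dual_space_scale:
  assumes "(f::'x::complex_inner \<Rightarrow> complex) \<in> dual_space"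
  shows "(\<lambda>x. c * f x) \<in> dual_space"
proof -
  obtain K where K: "\<forall>x. cmod (f x) \<le> K * norm x" using assms unfolding dual_space_def by blast
  then have "\<forall>x. cmod (c * f x) \<le> (cmod c * K) * norm x"
    by (simp add: norm_mult mult.assoc mult_left_mono)
  moreover have "\<forall>x y. c * f (x + y) = c * f x + c * f y"
    and "\<forall>d x. c * f (scaleC d x) = cnj d * (c * f x)"
    using assms unfolding dual_space_def by (simp_all add: algebra_simps)
  ultimately show ?thesis unfolding dual_space_def by blast
qed

lemma clinear_on_dualD:
  assumes "clinear_on_dual C" "f \<in> dual_space" "f' \<in> dual_space"
  shows "C (\<lambda>x. f x + f' x) = C f + C f'" "C (\<lambda>x. c * f x) = scaleC c (C f)"
  using assms unfolding clinear_on_dual_def by blast+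

lemma dual_adj_in_dual_space:
  assumes "bounded_clinear (G::'x::complex_inner \<Rightarrow> 'h::complex_inner)"
  shows "dual_adj G g \<in> dual_space"
proof -
  obtain K where lin: "clinear G" and K: "\<forall>x. norm (G x) \<le> K * norm x"
    using assms unfolding bounded_clinear_def by blast
  have "cmod (dual_adj G g x) \<le> (norm g * K) * norm x" for x
  proof -
    have "cmod (dual_adj G g x) \<le> norm g * norm (G x)"
      unfolding dual_adj_def by (rule norm_cinner_le)
    also have "\<dots> \<le> norm g * (K * norm x)" using K by (simp add: mult_left_mono)
    finally show ?thesis by (simp add: mult.assoc)
  qed
  then show ?thesis
    unfolding dual_space_def dual_adj_def
    by (auto simp: clinearD[OF lin] cinner_add_right cinner_scaleC_right)
qed

lemma clinear_functional_dual_adj: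
  assumes "bounded_clinear G" "clinear_on_dual C"
  shows "clinear_functional (\<lambda>g. cinner (C (dual_adj G g)) y)"
proof -
  have "dual_adj G (g + g') = (\<lambda>x. dual_adj G g x + dual_adj G g' x)"
    and "dual_adj G (scaleC c g) = (\<lambda>x. c * dual_adj G g x)" for g g' c
    unfolding dual_adj_def by (simp_all add: cinner_add_left cinner_scaleC_left)
  then show ?thesis
    unfolding clinear_functional_def
    using clinear_on_dualD[OF assms(2) dual_adj_in_dual_space[OF assms(1)]
        dual_adj_in_dual_space[OF assms(1)]]
    by (simp add: cinner_add_left cinner_scaleC_left)
qed

section \<open>Compact operators are small on a subspace of finite codimension\<close>

lemma compact_orthogonal_finite_small:
  fixes K :: "'a::complex_inner set"
  assumes "compact K" "0 < e"
  obtains Y where "finite Y" "\<And>z. z \<in> K \<Longrightarrow> \<forall>y\<in>Y. cinner z y = 0 \<Longrightarrow> norm z < e"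
proof -
  obtain Y where Y: "Y \<subseteq> K" "finite Y" "K \<subseteq> (\<Union>y\<in>Y. ball y e)"
    using compactE_image[OF assms(1), of K "\<lambda>y. ball y e"] assms(2) by force
  have "norm z < e" if "z \<in> K" "\<forall>y\<in>Y. cinner z y = 0" for z
  proof -
    obtain y where y: "y \<in> Y" "dist y z < e" using Y(3) \<open>z \<in> K\<close> by force
    have "cinner z (- y) = 0"
      using that(2) y(1) cinner_diff_right[of z 0 y] by simp
    then have "(norm z)\<^sup>2 \<le> (norm (z - y))\<^sup>2"
      using norm_add_square_orthogonal[of z "- y"] by simp
    then have "norm z \<le> norm (z - y)" by (rule power2_le_imp_le) simp
    also have "\<dots> < e" using y(2) by (simp add: dist_norm norm_minus_commute)
    finally show ?thesis .
  qed
  with Y(2) show ?thesis using that by blast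
qed

lemma compact_on_dual_small_on_orthogonal:
  fixes C :: "('a::complex_inner \<Rightarrow> complex) \<Rightarrow> 'b::complex_inner"
  assumes "compact_on_dual C" "0 < e"
  obtains Y where "finite Y"
    "\<And>\<psi>. \<psi> \<in> dual_space \<Longrightarrow> \<forall>y\<in>Y. cinner (C \<psi>) y = 0 \<Longrightarrow> norm (C \<psi>) \<le> e * dual_norm \<psi>"
proof -
  define S :: "('a \<Rightarrow> complex) set" where "S = {\<psi> \<in> dual_space. dual_norm \<psi> \<le> 1}"
  have lin: "clinear_on_dual C" using assms(1) unfolding compact_on_dual_def by blast
  have "S \<subseteq> dual_space" "\<forall>f\<in>S. dual_norm f \<le> 1" unfolding S_def by auto
  then have "compact (closure (C ` S))"
    using assms(1) unfolding compact_on_dual_def by blast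
  then obtain Y where Y: "finite Y"
    and small: "\<And>z. z \<in> closure (C ` S) \<Longrightarrow> \<forall>y\<in>Y. cinner z y = 0 \<Longrightarrow> norm z < e"
    using compact_orthogonal_finite_small assms(2) by blast
  have bound: "norm (C \<psi>) \<le> e * dual_norm \<psi>"
    if \<psi>: "\<psi> \<in> dual_space" and orth: "\<forall>y\<in>Y. cinner (C \<psi>) y = 0" for \<psi>
  proof (cases "dual_norm \<psi> = 0")
    case True
    then have "\<psi> x = 0" for x using norm_dual_le[OF \<psi>, of x] by simp
    then have "\<psi> = (\<lambda>x. 0 * \<psi> x)" by (intro ext) simp
    then have "C \<psi> = 0" using clinear_on_dualD(2)[OF lin \<psi> \<psi>, of 0] by simp
    then show ?thesis using True by simp
  next
    case False
    define r where "r = 1 / dual_norm \<psi>"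
    have r: "0 < r" using False dual_norm_nonneg[OF \<psi>] by (simp add: r_def)
    define \<psi>' where "\<psi>' = (\<lambda>x. complex_of_real r * \<psi> x)"
    have C\<psi>': "C \<psi>' = scaleC (complex_of_real r) (C \<psi>)"
      unfolding \<psi>'_def by (rule clinear_on_dualD(2)[OF lin \<psi> \<psi>])
    have \<psi>': "\<psi>' \<in> dual_space" unfolding \<psi>'_def by (rule dual_space_scale[OF \<psi>])
    have "dual_norm \<psi>' \<le> 1"
    proof (rule dual_norm_le[OF \<psi>'])
      fix x :: 'a
      assume "norm x \<le> 1"
      then have "cmod (\<psi> x) \<le> dual_norm \<psi>"
        using norm_dual_le[OF \<psi>, of x] dual_norm_nonneg[OF \<psi>] by (meson mult_left_le order_trans)
      then have "r * cmod (\<psi> x) \<le> r * dual_norm \<psi>" using r by simp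
      moreover have "cmod (\<psi>' x) = r * cmod (\<psi> x)" unfolding \<psi>'_def using r by (simp add: norm_mult)
      ultimately show "cmod (\<psi>' x) \<le> 1" using False by (simp add: r_def)
    qed
    then have "\<psi>' \<in> S" using \<psi>' unfolding S_def by blast
    then have "C \<psi>' \<in> closure (C ` S)" by (rule subsetD[OF closure_subset imageI])
    moreover have "\<forall>y\<in>Y. cinner (C \<psi>') y = 0"
      using orth unfolding C\<psi>' by (simp add: cinner_scaleC_left)
    ultimately have "norm (C \<psi>') < e" by (rule small)
    then have "r * norm (C \<psi>) < e" using r unfolding C\<psi>' by (simp add: norm_scaleC)
    then show ?thesis using r unfolding r_def by (simp add: field_simps)
  qed
  show ?thesis by (rule that[OF Y bound])
qed

lemma cinner_factorization:
  assumes "bounded_clinear G" "is_dual_adjoint Ms M" "F g = G (Ms (dual_adj G g))"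
  shows "cinner (F g) g = dual_adj G g (M (dual_adj G g))"
proof -
  have "cinner (F g) g = cnj (dual_adj G g (Ms (dual_adj G g)))"
    using assms(3) cinner_commute unfolding dual_adj_def by metis
  moreover have "dual_adj G g (Ms (dual_adj G g)) = cnj (dual_adj G g (M (dual_adj G g)))"
    using assms(2) dual_adj_in_dual_space[OF assms(1)] unfolding is_dual_adjoint_def by blast
  ultimately show ?thesis by simp
qed

lemma Re_pairing_nonneg_coercive_plus_small:
  assumes \<psi>: "\<psi> \<in> dual_space" and split: "M \<psi> = M0 \<psi> + C \<psi>"
    and coercive: "c * (dual_norm \<psi>)\<^sup>2 \<le> Re (\<psi> (M0 \<psi>))"
    and small: "norm (C \<psi>) \<le> c * dual_norm \<psi>"
  shows "0 \<le> Re (\<psi> (M \<psi>))"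
proof -
  have "\<psi> (M \<psi>) = \<psi> (M0 \<psi>) + \<psi> (C \<psi>)"
    using \<psi> split unfolding dual_space_def by simp
  moreover have "- Re (\<psi> (C \<psi>)) \<le> c * (dual_norm \<psi>)\<^sup>2"
  proof -
    have "- Re (\<psi> (C \<psi>)) \<le> cmod (\<psi> (C \<psi>))" using abs_Re_le_cmod[of "\<psi> (C \<psi>)"] by linarith
    also have "\<dots> \<le> dual_norm \<psi> * norm (C \<psi>)" by (rule norm_dual_le[OF \<psi>])
    also have "\<dots> \<le> dual_norm \<psi> * (c * dual_norm \<psi>)"
      using small dual_norm_nonneg[OF \<psi>] by (rule mult_left_mono)
    finally show ?thesis by (simp add: power2_eq_square mult_ac)
  qed
  ultimately show ?thesis using coercive by simp
qed

theorem theorem3p6: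
  fixes F :: "'h::chilbert_space \<Rightarrow> 'h"
    and G :: "'x::chilbert_space \<Rightarrow> 'h"
    and M M0 C Ms :: "('x \<Rightarrow> complex) \<Rightarrow> 'x"
  assumes F_lin: "clinear F"
    and F_compact: "compact_op F"
    and F_normal: "normal_op F"
    and G_bdd: "bounded_clinear G"
    and M_lin: "clinear_on_dual M"
    and M_bdd: "bounded_on_dual M"
    and Ms_adj: "is_dual_adjoint Ms M"
    and F_fact: "\<And>g. F g = G (Ms (dual_adj G g))"
    and null_fin: "finite_dim_subspace {g. dual_adj G g = (\<lambda>_. 0)}"
    and M_split: "\<forall>f\<in>dual_space. M f = M0 f + C f"
    and C_compact: "compact_on_dual C"
    and M0_sa: "selfadjoint_on_dual M0"
    and M0_coercive: "\<exists>c0>0. \<forall>\<phi>\<in>range (dual_adj G). Re (\<phi> (M0 \<phi>)) \<ge> c0 * (dual_norm \<phi>)\<^sup>2"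
  shows "finite {l. eigenvalue F l \<and> Re l < 0}"
proof -
  obtain c0 where "0 < c0"
    and coercive: "\<forall>\<phi>\<in>range (dual_adj G). c0 * (dual_norm \<phi>)\<^sup>2 \<le> Re (\<phi> (M0 \<phi>))"
    using M0_coercive by blast
  obtain Y where "finite Y"
    and small: "\<And>\<psi>. \<psi> \<in> dual_space \<Longrightarrow> \<forall>y\<in>Y. cinner (C \<psi>) y = 0 \<Longrightarrow> norm (C \<psi>) \<le> c0 * dual_norm \<psi>"
    by (rule compact_on_dual_small_on_orthogonal[OF C_compact \<open>0 < c0\<close>]) (rule that)
  define \<Phi> where "\<Phi> = (\<lambda>y g. cinner (C (dual_adj G g)) y) ` Y"
  have "finite \<Phi>" unfolding \<Phi>_def using \<open>finite Y\<close> by simp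
  have "clinear_on_dual C" using C_compact unfolding compact_on_dual_def by blast
  then have "\<forall>\<phi>\<in>\<Phi>. clinear_functional \<phi>"
    unfolding \<Phi>_def using clinear_functional_dual_adj[OF G_bdd] by blast
  moreover have "0 \<le> Re (cinner (F g) g)" if "\<forall>\<phi>\<in>\<Phi>. \<phi> g = 0" for g
  proof -
    have \<psi>: "dual_adj G g \<in> dual_space" by (rule dual_adj_in_dual_space[OF G_bdd])
    have "\<forall>y\<in>Y. cinner (C (dual_adj G g)) y = 0" using that unfolding \<Phi>_def by auto
    then have "norm (C (dual_adj G g)) \<le> c0 * dual_norm (dual_adj G g)" by (rule small[OF \<psi>])
    then have "0 \<le> Re (dual_adj G g (M (dual_adj G g)))"
      using Re_pairing_nonneg_coercive_plus_small[where M = M and M0 = M0 and C = C, OF \<psi>]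
        M_split \<psi> coercive by blast
    then show ?thesis using cinner_factorization[where F = F, OF G_bdd Ms_adj F_fact] by simp
  qed
  ultimately show ?thesis
    by (rule finite_negative_eigenvalues[OF F_lin F_normal \<open>finite \<Phi>\<close>])
qed

end
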